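(* There is a function $f_1(k,q)$ satisfying the following. Let $k,q\ge 2$ be integers. Let $T$ be a tree whose edges are labeled by elements of $\mathbb{Z}_q$, and let $L$ be a set of leaves of $T$ with $|L|=f_1(k,q)$. Then there exist a subset $L_0\subset L$ with $|L_0|=k$ and a residue $a\in\mathbb{Z}_q$ such that for every three leaves $x_1,x_2,x_3\in L_0$ there is a vertex $v\in V(T)$ such that the paths in $T$ from $v$ to $x_1$, $x_2$, $x_3$ are pairwise disjoint except at $v$ and each has weight $a$ modulo $q$.
   Context: The weight of a path in an edge-labeled tree is the sum (in $\mathbb{Z}_q$) of the labels of its edges. *)

theory Defs
  imports Main
begin

definition simple_graph :: "nat set \<Rightarrow> (nat \<Rightarrow> nat \<Rightarrow> bool) \<Rightarrow> bool" where
  "simple_graph V E \<longleftrightarrow> finite V \<and> (\<forall>u w. E u w \<longrightarrow> u \<in> V \<and> w \<in> V)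
     \<and> (\<forall>u w. E u w \<longrightarrow> E w u) \<and> (\<forall>u. \<not> E u u)"

definition is_walk :: "nat set \<Rightarrow> (nat \<Rightarrow> nat \<Rightarrow> bool) \<Rightarrow> nat list \<Rightarrow> bool" where
  "is_walk V E p \<longleftrightarrow> p \<noteq> [] \<and> set p \<subseteq> V \<and> (\<forall>i. Suc i < length p \<longrightarrow> E (p ! i) (p ! Suc i))"

definition is_path :: "nat set \<Rightarrow> (nat \<Rightarrow> nat \<Rightarrow> bool) \<Rightarrow> nat list \<Rightarrow> bool" where
  "is_path V E p \<longleftrightarrow> is_walk V E p \<and> distinct p"

definition connected_graph :: "nat set \<Rightarrow> (nat \<Rightarrow> nat \<Rightarrow> bool) \<Rightarrow> bool" where
  "connected_graph V E \<longleftrightarrow> V \<noteq> {} \<and>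
     (\<forall>u\<in>V. \<forall>w\<in>V. \<exists>p. is_path V E p \<and> hd p = u \<and> last p = w)"

definition has_cycle :: "nat set \<Rightarrow> (nat \<Rightarrow> nat \<Rightarrow> bool) \<Rightarrow> bool" where
  "has_cycle V E \<longleftrightarrow> (\<exists>p. is_path V E p \<and> length p \<ge> 3 \<and> E (last p) (hd p))"

definition is_tree :: "nat set \<Rightarrow> (nat \<Rightarrow> nat \<Rightarrow> bool) \<Rightarrow> bool" where
  "is_tree V E \<longleftrightarrow> simple_graph V E \<and> connected_graph V E \<and> \<not> has_cycle V E"

definition is_leaf :: "nat set \<Rightarrow> (nat \<Rightarrow> nat \<Rightarrow> bool) \<Rightarrow> nat \<Rightarrow> bool" where
  "is_leaf V E v \<longleftrightarrow> v \<in> V \<and> card {u \<in> V. E v u} = 1"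

definition path_weight :: "(nat set \<Rightarrow> int) \<Rightarrow> nat list \<Rightarrow> int" where
  "path_weight lab p = (\<Sum>i<length p - 1. lab {p ! i, p ! Suc i})"

end

theory Submission
  imports Defs "HOL-Library.Sublist" "HOL-Library.FuncSet"
begin

(* Root the graph at a vertex r and let root_path x be the path from r to x along parent pointers
   chosen on shortest walks.  These paths form a prefix-closed family, two of them share only the
   vertices of their longest common prefix, and for leaves other than r they are prefix-free.
   By pigeonhole many leaves have root paths of the same weight c mod q.  A Ramsey argument for
   prefix-free families of lists (either k lists branch at one common prefix, or a long comb of
   lists branches off one after another, and the branch points of the comb can be coloured) gives
   k leaves whose pairwise longest common prefixes all have the same weight b mod q.  For three of
   them, cut at the last vertex of the longest of their three common prefixes: two legs continue
   along the root paths with weight c - b, and the third leg runs back to where the third root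
   path branches off and then down to its leaf, with weight (b - b) + (c - b). *)

section \<open>Ramsey theorem for prefix-free families of lists\<close>

lemma pigeonhole_fiber:
  assumes "finite A" "f ` A \<subseteq> B" "finite B" "B \<noteq> {}" "card B * n \<le> card A"
  shows "\<exists>y\<in>B. n \<le> card {x\<in>A. f x = y}"
proof -
  obtain y where "y \<in> B" and y: "card A \<le> card (f -` {y} \<inter> A) * card B"
    using pigeonhole_card[of f A B] assms by auto
  have "f -` {y} \<inter> A = {x\<in>A. f x = y}" by auto
  moreover have "card B > 0" using assms(3,4) by (simp add: card_gt_0_iff)
  ultimately have "n \<le> card {x\<in>A. f x = y}"
    using y assms(5) by (metis le_trans mult.commute mult_le_cancel1)
  then show ?thesis using \<open>y \<in> B\<close> by blast
qed

lemma longest_common_prefix_commute: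
  "longest_common_prefix xs ys = longest_common_prefix ys xs"
  by (induction xs ys rule: longest_common_prefix.induct) auto

lemma longest_common_prefix_append_same:
  "longest_common_prefix (us @ xs) (us @ ys) = us @ longest_common_prefix xs ys"
  by (induction us) auto

lemma longest_common_prefix_nth_neq:
  "length (longest_common_prefix xs ys) < length xs \<Longrightarrow>
   length (longest_common_prefix xs ys) < length ys \<Longrightarrow>
   xs ! length (longest_common_prefix xs ys) \<noteq> ys ! length (longest_common_prefix xs ys)"
  by (induction xs ys rule: longest_common_prefix.induct) auto

lemma longest_common_prefix_eqI:
  assumes "strict_prefix us xs" "strict_prefix us ys" "xs ! length us \<noteq> ys ! length us"
  shows "longest_common_prefix xs ys = us"
proof -
  obtain x xs' y ys' where "xs = us @ x # xs'" "ys = us @ y # ys'"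
    using assms(1,2) by (meson strict_prefixE')
  then show ?thesis
    using assms(3) by (simp add: longest_common_prefix_append_same)
qed

definition prefix_free :: "'a list set \<Rightarrow> bool" where
  "prefix_free S \<longleftrightarrow> (\<forall>xs\<in>S. \<forall>ys\<in>S. prefix xs ys \<longrightarrow> xs = ys)"

lemma prefix_free_subset: "prefix_free S \<Longrightarrow> T \<subseteq> S \<Longrightarrow> prefix_free T"
  unfolding prefix_free_def by blast

lemma prefix_free_branch_point:
  assumes "finite S" "prefix_free S" "2 \<le> card S"
  obtains us xs ys where "\<forall>zs\<in>S. strict_prefix us zs"
    and "xs \<in> S" "ys \<in> S" "xs ! length us \<noteq> ys ! length us"
proof -
  let ?lcp = "longest_common_prefix"
  \<comment> \<open>the shortest common prefix of two members is a common prefix of all members\<close>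
  obtain x0 y0 where "x0 \<in> S" "y0 \<in> S" "x0 \<noteq> y0"
    using assms(3) by (metis card_2_iff' obtain_subset_with_card_n subset_iff)
  then obtain xs ys where xs: "xs \<in> S" and ys: "ys \<in> S" "xs \<noteq> ys"
    and min: "\<And>xs' ys'. xs' \<in> S \<Longrightarrow> ys' \<in> S \<Longrightarrow> xs' \<noteq> ys' \<Longrightarrow>
                 length (?lcp xs ys) \<le> length (?lcp xs' ys')"
    using ex_has_least_nat[of "\<lambda>(xs, ys). xs \<in> S \<and> ys \<in> S \<and> xs \<noteq> ys" "(x0, y0)"
        "\<lambda>(xs, ys). length (?lcp xs ys)"] by auto
  let ?us = "?lcp xs ys"
  have "prefix ?us zs" if "zs \<in> S" for zs
  proof (cases "zs = xs")
    case True
    then show ?thesis by (simp add: longest_common_prefix_prefix1)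
  next
    case False
    then have "prefix ?us (?lcp xs zs)"
      using min[OF xs that] False longest_common_prefix_prefix1 prefix_length_prefix by metis
    then show ?thesis using longest_common_prefix_prefix2 prefix_order.trans by blast
  qed
  moreover have "?us \<notin> S"
    using assms(2) xs ys calculation
    unfolding prefix_free_def by metis
  ultimately have strict: "\<forall>zs\<in>S. strict_prefix ?us zs"
    by (metis strict_prefixI)
  then have "xs ! length ?us \<noteq> ys ! length ?us"
    using xs ys by (simp add: longest_common_prefix_nth_neq prefix_length_less)
  then show thesis using that strict xs ys by blast
qed

definition uniform_lcp :: "'a list set \<Rightarrow> bool" where
  "uniform_lcp S \<longleftrightarrow> (\<exists>us. \<forall>xs\<in>S. \<forall>ys\<in>S. xs \<noteq> ys \<longrightarrow> longest_common_prefix xs ys = us)"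

(* The lists leave a common spine one after another: yss ! i branches off all later ones at us i. *)
definition lcp_comb :: "'a list list \<Rightarrow> bool" where
  "lcp_comb yss \<longleftrightarrow> distinct yss \<and> (\<exists>us. \<forall>i j. i < j \<longrightarrow> j < length yss \<longrightarrow>
     longest_common_prefix (yss ! i) (yss ! j) = us i)"

lemma lcp_comb_Cons:
  assumes "lcp_comb yss" "ys \<notin> set yss" "\<forall>zs\<in>set yss. longest_common_prefix ys zs = us"
  shows "lcp_comb (ys # yss)"
proof -
  obtain vs where "distinct yss" and vs: "\<And>i j. i < j \<Longrightarrow> j < length yss \<Longrightarrow>
      longest_common_prefix (yss ! i) (yss ! j) = vs i"
    using assms(1) unfolding lcp_comb_def by blast
  have "longest_common_prefix ((ys # yss) ! i) ((ys # yss) ! j) = case_nat us vs i"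
    if "i < j" "j < length (ys # yss)" for i j
    using that vs assms(3) by (cases i; cases j) auto
  then show ?thesis
    using assms(2) \<open>distinct yss\<close> unfolding lcp_comb_def by auto
qed

lemma uniform_lcp_transversal:
  assumes "\<forall>xs\<in>S. \<forall>ys\<in>S. h xs \<noteq> h ys \<longrightarrow> longest_common_prefix xs ys = us"
    and "k \<le> card (h ` S)"
  shows "\<exists>S0\<subseteq>S. card S0 = k \<and> uniform_lcp S0"
proof -
  obtain H where H: "H \<subseteq> h ` S" "card H = k"
    using assms(2) by (meson obtain_subset_with_card_n)
  let ?S0 = "inv_into S h ` H"
  have "?S0 \<subseteq> S" "card ?S0 = k"
    using H by (auto simp: inv_into_into card_image inj_on_inv_into)
  moreover have "uniform_lcp ?S0"
    unfolding uniform_lcp_def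
  proof (intro exI[of _ us] ballI impI)
    fix xs ys assume "xs \<in> ?S0" "ys \<in> ?S0" "xs \<noteq> ys"
    then obtain a b where "a \<in> H" "b \<in> H" "xs = inv_into S h a" "ys = inv_into S h b" "a \<noteq> b"
      by blast
    moreover have "a \<in> h ` S" "b \<in> h ` S" using H(1) \<open>a \<in> H\<close> \<open>b \<in> H\<close> by auto
    ultimately have "xs \<in> S" "ys \<in> S" "h xs \<noteq> h ys"
      by (auto simp: inv_into_into f_inv_into_f)
    then show "longest_common_prefix xs ys = us" using assms(1) by blast
  qed
  ultimately show ?thesis by blast
qed

(* Group S by the letter after its branch point: either there are k groups, or some group is large
   enough for induction and a member of another group is put in front of its comb. *)
lemma prefix_free_uniform_or_comb:
  fixes S :: "'a list set"
  assumes "2 \<le> k" "finite S" "prefix_free S" "k ^ m \<le> card S"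
  shows "(\<exists>S0\<subseteq>S. card S0 = k \<and> uniform_lcp S0) \<or>
    (\<exists>yss. length yss = m \<and> set yss \<subseteq> S \<and> lcp_comb yss)"
  using assms(2-4)
proof (induction m arbitrary: S)
  case 0
  show ?case by (auto simp: lcp_comb_def)
next
  case (Suc m)
  have "k \<le> k ^ Suc m" using assms(1) by simp
  then have "2 \<le> card S" using Suc.prems(3) assms(1) by linarith
  then obtain us xs0 ys0 where strict: "\<forall>zs\<in>S. strict_prefix us zs"
    and "xs0 \<in> S" "ys0 \<in> S" "xs0 ! length us \<noteq> ys0 ! length us"
    by (rule prefix_free_branch_point[OF Suc.prems(1,2)])
  define h :: "'a list \<Rightarrow> 'a" where "h zs = zs ! length us" for zs
  have branch: "longest_common_prefix xs ys = us" if "xs \<in> S" "ys \<in> S" "h xs \<noteq> h ys" for xs ys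
    using strict that unfolding h_def by (simp add: longest_common_prefix_eqI)
  show ?case
  proof (cases "k \<le> card (h ` S)")
    case True
    then show ?thesis
      using branch by (intro disjI1 uniform_lcp_transversal[where h = h and us = us]) auto
  next
    case False
    have "card (h ` S) * k ^ m \<le> (k - 1) * k ^ m"
      using False by (intro mult_right_mono) auto
    also have "\<dots> \<le> card S"
      using Suc.prems(3) by (simp add: algebra_simps)
    finally obtain c where "c \<in> h ` S" and c: "k ^ m \<le> card {zs\<in>S. h zs = c}"
      using pigeonhole_fiber[of S h "h ` S" "k ^ m"] Suc.prems(1) \<open>xs0 \<in> S\<close> by auto
    let ?G = "{zs\<in>S. h zs = c}"
    have "finite ?G" "prefix_free ?G"
      using Suc.prems(1,2) by (auto intro: prefix_free_subset)
    from Suc.IH[OF this c] show ?thesis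
    proof
      assume "\<exists>S0\<subseteq>?G. card S0 = k \<and> uniform_lcp S0"
      then show ?thesis by blast
    next
      assume "\<exists>yss. length yss = m \<and> set yss \<subseteq> ?G \<and> lcp_comb yss"
      then obtain yss where yss: "length yss = m" "set yss \<subseteq> ?G" "lcp_comb yss"
        by blast
      obtain y0 where "y0 \<in> S" "h y0 \<noteq> c"
        using \<open>xs0 \<in> S\<close> \<open>ys0 \<in> S\<close> \<open>xs0 ! length us \<noteq> ys0 ! length us\<close>
        unfolding h_def by metis
      then have "lcp_comb (y0 # yss)"
        using yss(2,3) branch by (intro lcp_comb_Cons[where us = us]) auto
      then show ?thesis
        using yss(1,2) \<open>y0 \<in> S\<close> by (intro disjI2 exI[of _ "y0 # yss"]) auto
    qed
  qed
qed

(* Among the first card C * (k - 1) branch points, k - 1 have the same colour; the lists branching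
   off there, together with the last list, are the k lists. *)
lemma lcp_comb_monochromatic:
  fixes col :: "'a list \<Rightarrow> 'c"
  assumes "lcp_comb yss" "length yss = card C * (k - 1) + 1" "0 < k"
    and "finite C" "\<And>xs. col xs \<in> C"
  shows "\<exists>S0\<subseteq>set yss. card S0 = k \<and>
    (\<exists>c. \<forall>xs\<in>S0. \<forall>ys\<in>S0. xs \<noteq> ys \<longrightarrow> col (longest_common_prefix xs ys) = c)"
proof -
  let ?N = "card C * (k - 1)"
  obtain us where "distinct yss"
    and us: "\<And>i j. i < j \<Longrightarrow> j < ?N + 1 \<Longrightarrow> longest_common_prefix (yss ! i) (yss ! j) = us i"
    using assms(1,2) unfolding lcp_comb_def by metis
  have "C \<noteq> {}" using assms(5) by blast
  then obtain c where "k - 1 \<le> card {i\<in>{..<?N}. col (us i) = c}"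
    using pigeonhole_fiber[of "{..<?N}" "col \<circ> us" C "k - 1"] assms(4,5) by auto
  then obtain I where I: "I \<subseteq> {i\<in>{..<?N}. col (us i) = c}" "card I = k - 1"
    by (meson obtain_subset_with_card_n)
  let ?J = "insert ?N I"
  have "?N \<notin> I" "finite I" using I(1) finite_subset[OF I(1)] by auto
  then have J: "?J \<subseteq> {..?N}" "card ?J = k"
    using I assms(3) by auto
  have "inj_on ((!) yss) ?J"
    using J(1) assms(2) \<open>distinct yss\<close> by (intro inj_on_nth) auto
  then have "card ((!) yss ` ?J) = k" using J(2) card_image by metis
  moreover have "(!) yss ` ?J \<subseteq> set yss"
    using J(1) assms(2) by (force intro: nth_mem)
  moreover have mono: "col (longest_common_prefix (yss ! i) (yss ! j)) = c"
    if "i \<in> ?J" "j \<in> ?J" "i < j" for i j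
  proof -
    have "i \<in> I" "j < ?N + 1" using that J(1) by auto
    then show ?thesis using I(1) us[OF \<open>i < j\<close>] by auto
  qed
  have "\<forall>xs\<in>(!) yss ` ?J. \<forall>ys\<in>(!) yss ` ?J. xs \<noteq> ys \<longrightarrow>
      col (longest_common_prefix xs ys) = c"
  proof (intro ballI impI)
    fix xs ys assume "xs \<in> (!) yss ` ?J" "ys \<in> (!) yss ` ?J" "xs \<noteq> ys"
    then obtain i j where ij: "i \<in> ?J" "j \<in> ?J" "xs = yss ! i" "ys = yss ! j" "i \<noteq> j"
      by blast
    then consider "i < j" | "j < i" by linarith
    then show "col (longest_common_prefix xs ys) = c"
    proof cases
      case 1
      then show ?thesis using mono ij by simp
    next
      case 2
      then show ?thesis using mono[of j i] ij by (simp add: longest_common_prefix_commute)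
    qed
  qed
  ultimately show ?thesis by blast
qed

theorem prefix_free_Ramsey_lcp:
  fixes col :: "'a list \<Rightarrow> 'c"
  assumes "2 \<le> k" "finite S" "prefix_free S" "finite C" "\<And>xs. col xs \<in> C"
    and "k ^ (card C * (k - 1) + 1) \<le> card S"
  shows "\<exists>S0\<subseteq>S. card S0 = k \<and>
    (\<exists>c. \<forall>xs\<in>S0. \<forall>ys\<in>S0. xs \<noteq> ys \<longrightarrow> col (longest_common_prefix xs ys) = c)"
  using prefix_free_uniform_or_comb[OF assms(1-3,6)]
proof
  assume "\<exists>S0\<subseteq>S. card S0 = k \<and> uniform_lcp S0"
  then show ?thesis unfolding uniform_lcp_def by metis
next
  assume "\<exists>yss. length yss = card C * (k - 1) + 1 \<and> set yss \<subseteq> S \<and> lcp_comb yss"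
  then obtain yss where "length yss = card C * (k - 1) + 1" "set yss \<subseteq> S" "lcp_comb yss"
    by blast
  moreover obtain S0 where "S0 \<subseteq> set yss" "card S0 = k"
    "\<exists>c. \<forall>xs\<in>S0. \<forall>ys\<in>S0. xs \<noteq> ys \<longrightarrow> col (longest_common_prefix xs ys) = c"
    using lcp_comb_monochromatic[of yss C k col] calculation assms(1,4,5) by auto
  ultimately show ?thesis by blast
qed

section \<open>Paths, their weights, and tripods\<close>

lemma is_walk_iff: "is_walk V E p \<longleftrightarrow> p \<noteq> [] \<and> set p \<subseteq> V \<and> successively E p"
  by (auto simp: is_walk_def successively_conv_nth)

lemma is_path_iff: "is_path V E p \<longleftrightarrow> p \<noteq> [] \<and> set p \<subseteq> V \<and> successively E p \<and> distinct p"
  by (auto simp: is_path_def is_walk_iff)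

lemma is_path_prefix: "is_path V E (xs @ ys) \<Longrightarrow> xs \<noteq> [] \<Longrightarrow> is_path V E xs"
  by (auto simp: is_path_iff successively_append_iff)

lemma is_path_suffix_from_last: "is_path V E (xs @ ys) \<Longrightarrow> xs \<noteq> [] \<Longrightarrow> is_path V E (last xs # ys)"
  by (simp add: is_path_iff successively_append_iff successively_Cons) (use last_in_set in blast)

lemma is_path_rev:
  assumes "\<And>u w. E u w \<Longrightarrow> E w u" "is_path V E p"
  shows "is_path V E (rev p)"
proof -
  have "successively E p" using assms(2) by (simp add: is_path_iff)
  then have "successively (\<lambda>x y. E y x) p" by (rule successively_mono) (rule assms(1))
  then show ?thesis using assms(2) by (simp add: is_path_iff)
qed

lemma is_path_replace_prefix:
  assumes "is_path V E (xs @ ys)" "is_path V E zs" "last zs = last xs" "xs \<noteq> []"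
    and "set zs \<inter> set ys = {}"
  shows "is_path V E (zs @ ys)"
  using assms by (auto simp: is_path_iff successively_append_iff)

lemma path_weight_Cons_Cons: "path_weight lab (a # b # xs) = lab {a, b} + path_weight lab (b # xs)"
  unfolding path_weight_def by (simp add: sum.lessThan_Suc_shift del: sum.lessThan_Suc)

lemma path_weight_singleton [simp]: "path_weight lab [a] = 0"
  by (simp add: path_weight_def)

lemma path_weight_append:
  "xs \<noteq> [] \<Longrightarrow> path_weight lab (xs @ ys) = path_weight lab xs + path_weight lab (last xs # ys)"
proof (induction xs rule: induct_list012)
  case (3 a b xs)
  then show ?case by (simp add: path_weight_Cons_Cons)
qed auto

lemma path_weight_rev: "path_weight lab (rev xs) = path_weight lab xs"
proof (induction xs rule: induct_list012)
  case (3 a b xs)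
  have "path_weight lab (rev (a # b # xs)) = path_weight lab (rev (b # xs) @ [a])"
    by simp
  also have "\<dots> = path_weight lab (rev (b # xs)) + lab {b, a}"
    by (subst path_weight_append) (simp_all add: last_rev path_weight_Cons_Cons)
  also have "\<dots> = path_weight lab (a # b # xs)"
    using "3.IH"(2) by (simp add: path_weight_Cons_Cons insert_commute)
  finally show ?case .
qed auto

definition tripod ::
  "nat set \<Rightarrow> (nat \<Rightarrow> nat \<Rightarrow> bool) \<Rightarrow> nat \<Rightarrow> nat list \<Rightarrow> nat list \<Rightarrow> nat list \<Rightarrow> bool"
where
  "tripod V E v p1 p2 p3 \<longleftrightarrow> is_path V E p1 \<and> is_path V E p2 \<and> is_path V E p3 \<and>
     hd p1 = v \<and> hd p2 = v \<and> hd p3 = v \<and>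
     set p1 \<inter> set p2 = {v} \<and> set p1 \<inter> set p3 = {v} \<and> set p2 \<inter> set p3 = {v}"

lemma tripod_swap23: "tripod V E v p1 p2 p3 \<Longrightarrow> tripod V E v p1 p3 p2"
  unfolding tripod_def by (simp add: Int_commute)

lemma tripod_swap13: "tripod V E v p1 p2 p3 \<Longrightarrow> tripod V E v p3 p2 p1"
  unfolding tripod_def by (simp add: Int_commute)

(* The third leg walks back along C to the last vertex of D and then follows B3. *)
lemma tripod_of_branching:
  assumes sym: "\<And>u w. E u w \<Longrightarrow> E w u"
    and A1: "is_path V E (C @ B1)" and A2: "is_path V E (C @ B2)" and A3: "is_path V E (D @ B3)"
    and C: "C = D @ X" and "D \<noteq> []"
    and disj: "set B1 \<inter> set B2 = {}" "set B1 \<inter> set B3 = {}" "set B2 \<inter> set B3 = {}"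
      "set C \<inter> set B3 = {}"
  shows "tripod V E (last C) (last C # B1) (last C # B2) (rev (last D # X) @ B3)"
proof -
  have "C \<noteq> []" using C \<open>D \<noteq> []\<close> by simp
  then have "is_path V E (D @ X)" using A1 C is_path_prefix by blast
  then have "is_path V E (last D # X)" using \<open>D \<noteq> []\<close> by (rule is_path_suffix_from_last)
  moreover have third_leg: "set (last D # X) \<subseteq> set C" "last C \<in> set (last D # X)"
    using C \<open>D \<noteq> []\<close> by (auto simp: last_append)
  ultimately have "is_path V E (rev (last D # X) @ B3)"
    using A3 \<open>D \<noteq> []\<close> disj(4)
    by (intro is_path_replace_prefix[OF A3] is_path_rev[OF sym]) auto
  moreover have "hd (rev (last D # X) @ B3) = last C"
    using C \<open>D \<noteq> []\<close> by (simp add: hd_append hd_rev last_append)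
  moreover have "set C \<inter> set B1 = {}" "set C \<inter> set B2 = {}"
    using A1 A2 by (auto simp: is_path_iff)
  moreover have "last C \<in> set C" using \<open>C \<noteq> []\<close> by simp
  ultimately show ?thesis
    unfolding tripod_def using disj third_leg A1 A2 \<open>C \<noteq> []\<close>
    by (auto simp: is_path_suffix_from_last)
qed

definition weighted_tripod ::
  "nat set \<Rightarrow> (nat \<Rightarrow> nat \<Rightarrow> bool) \<Rightarrow> (nat set \<Rightarrow> int) \<Rightarrow> int \<Rightarrow> int \<Rightarrow> nat \<Rightarrow> nat \<Rightarrow> nat \<Rightarrow> bool"
where
  "weighted_tripod V E lab q a x1 x2 x3 \<longleftrightarrow> (\<exists>v\<in>V. \<exists>p1 p2 p3.
     is_path V E p1 \<and> is_path V E p2 \<and> is_path V E p3 \<and>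
     hd p1 = v \<and> hd p2 = v \<and> hd p3 = v \<and>
     last p1 = x1 \<and> last p2 = x2 \<and> last p3 = x3 \<and>
     set p1 \<inter> set p2 = {v} \<and> set p1 \<inter> set p3 = {v} \<and> set p2 \<inter> set p3 = {v} \<and>
     path_weight lab p1 mod q = a \<and> path_weight lab p2 mod q = a \<and> path_weight lab p3 mod q = a)"

lemma weighted_tripodI:
  assumes "v \<in> V" "tripod V E v p1 p2 p3" "last p1 = x1" "last p2 = x2" "last p3 = x3"
    "path_weight lab p1 mod q = a" "path_weight lab p2 mod q = a" "path_weight lab p3 mod q = a"
  shows "weighted_tripod V E lab q a x1 x2 x3"
  using assms unfolding weighted_tripod_def tripod_def
  by (intro bexI[of _ v] exI[of _ p1] exI[of _ p2] exI[of _ p3]) simp_all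

lemma weighted_tripodE:
  assumes "weighted_tripod V E lab q a x1 x2 x3"
  obtains v p1 p2 p3 where "v \<in> V" "tripod V E v p1 p2 p3" "last p1 = x1" "last p2 = x2"
    "last p3 = x3" "path_weight lab p1 mod q = a" "path_weight lab p2 mod q = a"
    "path_weight lab p3 mod q = a"
  using assms unfolding weighted_tripod_def tripod_def by blast

lemma weighted_tripod_swap23:
  "weighted_tripod V E lab q a x1 x2 x3 \<Longrightarrow> weighted_tripod V E lab q a x1 x3 x2"
  by (elim weighted_tripodE) (rule weighted_tripodI; assumption?; rule tripod_swap23)

lemma weighted_tripod_swap13:
  "weighted_tripod V E lab q a x1 x2 x3 \<Longrightarrow> weighted_tripod V E lab q a x3 x2 x1"
  by (elim weighted_tripodE) (rule weighted_tripodI; assumption?; rule tripod_swap13)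

lemma weighted_tripod_of_branching:
  fixes lab :: "nat set \<Rightarrow> int" and q b c :: int
  assumes sym: "\<And>u w. E u w \<Longrightarrow> E w u"
    and A: "is_path V E (C @ B1)" "is_path V E (C @ B2)" "is_path V E (D @ B3)"
    and X: "C = D @ X" and "D \<noteq> []"
    and disj: "set B1 \<inter> set B2 = {}" "set B1 \<inter> set B3 = {}" "set B2 \<inter> set B3 = {}"
      "set C \<inter> set B3 = {}"
    and c: "path_weight lab (C @ B1) mod q = c" "path_weight lab (C @ B2) mod q = c"
      "path_weight lab (D @ B3) mod q = c"
    and b: "path_weight lab C mod q = b" "path_weight lab D mod q = b"
  shows "weighted_tripod V E lab q ((c - b) mod q) (last (C @ B1)) (last (C @ B2)) (last (D @ B3))"
proof -
  let ?W = "path_weight lab"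
  have "C \<noteq> []" using X \<open>D \<noteq> []\<close> by simp
  have leg: "?W (last xs # ys) mod q = (c - b) mod q"
    if "xs \<noteq> []" "?W (xs @ ys) mod q = c" "?W xs mod q = b" for xs ys
    using that mod_diff_eq[of "?W (xs @ ys)" q "?W xs"] by (simp add: path_weight_append)
  have "?W (rev (last D # X) @ B3) = ?W (last D # X) + ?W (last D # B3)"
    using path_weight_rev[of lab "last D # X"]
    by (subst path_weight_append) (simp_all add: last_rev)
  moreover have "?W (last D # X) = ?W C - ?W D"
    using \<open>D \<noteq> []\<close> by (simp add: X path_weight_append)
  moreover have "(?W C - ?W D) mod q = 0"
    using mod_diff_eq[of "?W C" q "?W D"] b by simp
  ultimately have "?W (rev (last D # X) @ B3) mod q = ?W (last D # B3) mod q"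
    by (simp add: mod_add_left_eq[symmetric])
  also have "\<dots> = (c - b) mod q"
    using leg[OF \<open>D \<noteq> []\<close> c(3) b(2)] .
  finally have "?W (rev (last D # X) @ B3) mod q = (c - b) mod q" .
  moreover have "last (last C # B1) = last (C @ B1)" "last (last C # B2) = last (C @ B2)"
    "last (rev (last D # X) @ B3) = last (D @ B3)"
    using \<open>C \<noteq> []\<close> \<open>D \<noteq> []\<close> by (simp_all add: last_append)
  moreover have "last C \<in> V"
    using A(1) \<open>C \<noteq> []\<close> unfolding is_path_iff by auto
  ultimately show ?thesis
    using weighted_tripodI[OF _ tripod_of_branching[OF sym A X \<open>D \<noteq> []\<close> disj] _ _ _
        leg[OF \<open>C \<noteq> []\<close> c(1) b(1)] leg[OF \<open>C \<noteq> []\<close> c(2) b(1)]]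
    by blast
qed

section \<open>Root paths in a connected graph\<close>

locale rooted_graph =
  fixes V :: "nat set" and E :: "nat \<Rightarrow> nat \<Rightarrow> bool" and r :: nat
  assumes simple: "simple_graph V E" and connected: "connected_graph V E" and root: "r \<in> V"
begin

lemma edge_sym: "E u w \<Longrightarrow> E w u"
  and edge_vertices: "E u w \<Longrightarrow> u \<in> V \<and> w \<in> V"
  and finite_vertices: "finite V"
  using simple unfolding simple_graph_def by blast+

definition depth :: "nat \<Rightarrow> nat" where
  "depth x = (LEAST n. \<exists>w. is_walk V E w \<and> hd w = r \<and> last w = x \<and> length w = Suc n)"

lemma depth_walk:
  assumes "x \<in> V"
  obtains w where "is_walk V E w" "hd w = r" "last w = x" "length w = Suc (depth x)"
proof -
  obtain p where p: "is_path V E p" "hd p = r" "last p = x"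
    using connected assms root unfolding connected_graph_def by blast
  then have "is_walk V E p" "p \<noteq> []" by (auto simp: is_path_def is_walk_iff)
  then have "\<exists>n w. is_walk V E w \<and> hd w = r \<and> last w = x \<and> length w = Suc n"
    using p by (intro exI[of _ "length p - 1"] exI[of _ p]) auto
  then have "\<exists>w. is_walk V E w \<and> hd w = r \<and> last w = x \<and> length w = Suc (depth x)"
    unfolding depth_def by (rule LeastI_ex)
  then show thesis using that by blast
qed

lemma depth_less:
  assumes "is_walk V E w" "hd w = r" "last w = x"
  shows "depth x < length w"
proof -
  have "w \<noteq> []" using assms(1) by (simp add: is_walk_iff)
  then have "\<exists>w'. is_walk V E w' \<and> hd w' = r \<and> last w' = x \<and> length w' = Suc (length w - 1)"
    using assms by (intro exI[of _ w]) auto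
  then have "depth x \<le> length w - 1" unfolding depth_def by (rule Least_le)
  then show ?thesis using \<open>w \<noteq> []\<close> by (cases w) auto
qed

lemma depth_eq_0:
  assumes "x \<in> V" "depth x = 0"
  shows "x = r"
proof -
  obtain w where "hd w = r" "last w = x" "length w = Suc (depth x)"
    using depth_walk[OF assms(1)] by blast
  then show "x = r" using assms(2) by (cases w) auto
qed

lemma parent_exists:
  assumes "x \<in> V" "x \<noteq> r"
  shows "\<exists>y. E y x \<and> Suc (depth y) = depth x"
proof -
  obtain w where w: "is_walk V E w" "hd w = r" "last w = x" "length w = Suc (depth x)"
    using depth_walk[OF assms(1)] .
  have "depth x \<noteq> 0" using assms depth_eq_0 by blast
  define w' where "w' = butlast w"
  have w': "w = w' @ [x]" "w' \<noteq> []"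
    using w(3,4) \<open>depth x \<noteq> 0\<close> unfolding w'_def
    by (auto simp flip: length_0_conv)
  let ?y = "last w'"
  have "E ?y x" "is_walk V E w'" "hd w' = r"
    using w(1,2) w' by (auto simp: is_walk_iff successively_append_iff)
  then have "Suc (depth ?y) \<le> depth x"
    using depth_less[of w' ?y] w(4) w' by simp
  moreover have "depth x \<le> Suc (depth ?y)"
  proof -
    obtain u where u: "is_walk V E u" "hd u = r" "last u = ?y" "length u = Suc (depth ?y)"
      using depth_walk edge_vertices[OF \<open>E ?y x\<close>] by blast
    then have "is_walk V E (u @ [x])" "hd (u @ [x]) = r"
      using \<open>E ?y x\<close> assms(1) by (auto simp: is_walk_iff successively_append_iff)
    then show ?thesis using depth_less[of "u @ [x]" x] u(4) by simp
  qed
  ultimately show ?thesis using \<open>E ?y x\<close> by (intro exI[of _ ?y]) simp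
qed

definition parent :: "nat \<Rightarrow> nat" where
  "parent x = (SOME y. E y x \<and> Suc (depth y) = depth x)"

lemma parent:
  assumes "x \<in> V" "x \<noteq> r"
  shows "E (parent x) x" "parent x \<in> V" "Suc (depth (parent x)) = depth x"
proof -
  show "E (parent x) x" "Suc (depth (parent x)) = depth x"
    using someI_ex[OF parent_exists[OF assms]] unfolding parent_def by blast+
  then show "parent x \<in> V" using edge_vertices by blast
qed

function root_path :: "nat \<Rightarrow> nat list" where
  "root_path x = (if x \<in> V \<and> x \<noteq> r then root_path (parent x) @ [x] else [x])"
  by auto
termination
  by (relation "measure depth") (auto simp flip: parent(3))

declare root_path.simps [simp del]

lemma root_path_root [simp]: "root_path r = [r]"
  using root_path.simps[of r] by simp

lemma root_path_parent: "x \<in> V \<Longrightarrow> x \<noteq> r \<Longrightarrow> root_path x = root_path (parent x) @ [x]"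
  using root_path.simps[of x] by simp

lemma root_path_not_Nil [simp]: "root_path x \<noteq> []"
  using root_path.simps[of x] by (simp split: if_splits)

lemma last_root_path [simp]: "last (root_path x) = x"
  using root_path.simps[of x] by (simp split: if_splits)

lemma depth_le_of_mem_root_path: "x \<in> V \<Longrightarrow> z \<in> set (root_path x) \<Longrightarrow> depth z \<le> depth x"
proof (induction x rule: root_path.induct)
  case (1 x)
  show ?case
  proof (cases "x = r")
    case False
    then have "z \<in> set (root_path (parent x)) \<or> z = x"
      using "1.prems" by (auto simp: root_path_parent)
    then show ?thesis
      using "1.IH" "1.prems"(1) False parent(2,3)[OF "1.prems"(1) False] by fastforce
  qed (use "1.prems" in simp)
qed

lemma hd_root_path: "x \<in> V \<Longrightarrow> hd (root_path x) = r"
proof (induction x rule: root_path.induct)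
  case (1 x)
  then show ?case
    by (cases "x = r") (simp_all add: root_path_parent parent(2))
qed

lemma is_path_root_path: "x \<in> V \<Longrightarrow> is_path V E (root_path x)"
proof (induction x rule: root_path.induct)
  case (1 x)
  show ?case
  proof (cases "x = r")
    case False
    note parent = parent[OF "1.prems" False]
    have "x \<notin> set (root_path (parent x))"
      using depth_le_of_mem_root_path[of "parent x" x] parent(2,3) by fastforce
    then show ?thesis
      using "1.IH" "1.prems" False parent(1,2)
      by (auto simp: root_path_parent is_path_iff successively_append_iff)
  qed (simp add: root is_path_iff)
qed

lemma prefix_root_path_of_mem:
  "x \<in> V \<Longrightarrow> z \<in> set (root_path x) \<Longrightarrow> prefix (root_path z) (root_path x)"
proof (induction x rule: root_path.induct)
  case (1 x)
  show ?case
  proof (cases "x = r \<or> z = x")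
    case False
    then have "z \<in> set (root_path (parent x))"
      using "1.prems" by (simp add: root_path_parent)
    then show ?thesis
      using "1.IH" "1.prems"(1) False parent(2)[OF "1.prems"(1)]
      by (simp add: root_path_parent)
  qed (use "1.prems" in auto)
qed

lemma root_path_inter_subset:
  assumes "x \<in> V" "y \<in> V"
  shows "set (root_path x) \<inter> set (root_path y) \<subseteq>
    set (longest_common_prefix (root_path x) (root_path y))"
proof
  fix z assume "z \<in> set (root_path x) \<inter> set (root_path y)"
  then have "prefix (root_path z) (longest_common_prefix (root_path x) (root_path y))"
    using assms by (auto intro: longest_common_prefix_max_prefix prefix_root_path_of_mem)
  moreover have "z \<in> set (root_path z)"
    using last_in_set[OF root_path_not_Nil] by simp
  ultimately show "z \<in> set (longest_common_prefix (root_path x) (root_path y))"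
    using set_mono_prefix by blast
qed

lemma drop_root_path_disjoint:
  assumes "x \<in> V" "y \<in> V" "length (longest_common_prefix (root_path x) (root_path y)) \<le> n"
  shows "set (drop n (root_path x)) \<inter> set (root_path y) = {}"
proof -
  let ?lcp = "longest_common_prefix (root_path x) (root_path y)"
  have "length ?lcp \<le> length (root_path x)"
    by (rule prefix_length_le[OF longest_common_prefix_prefix1])
  then have "prefix ?lcp (take n (root_path x))"
    using assms(3) by (intro prefix_length_prefix[OF longest_common_prefix_prefix1 take_is_prefix]) simp
  then have "set ?lcp \<subseteq> set (take n (root_path x))"
    by (rule set_mono_prefix)
  moreover have "set (drop n (root_path x)) \<subseteq> set (root_path x)"
    by (rule set_drop_subset)
  moreover have "set (take n (root_path x)) \<inter> set (drop n (root_path x)) = {}"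
    using is_path_root_path[OF assms(1)] unfolding is_path_iff
    by (metis append_take_drop_id distinct_append)
  ultimately show ?thesis
    using root_path_inter_subset[OF assms(1,2)] by blast
qed

lemma longest_common_prefix_root_path_not_Nil:
  assumes "x \<in> V" "y \<in> V"
  shows "longest_common_prefix (root_path x) (root_path y) \<noteq> []"
proof -
  obtain xs ys where "root_path x = r # xs" "root_path y = r # ys"
    using hd_root_path[OF assms(1)] hd_root_path[OF assms(2)] root_path_not_Nil
    by (metis list.collapse)
  then show ?thesis by simp
qed

lemma prefix_free_root_paths_of_leaves:
  assumes "\<forall>x\<in>L. is_leaf V E x" "r \<notin> L"
  shows "prefix_free (root_path ` L)"
  unfolding prefix_free_def
proof (intro ballI impI)
  fix xs ys assume "xs \<in> root_path ` L" "ys \<in> root_path ` L" "prefix xs ys"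
  then obtain x y where "x \<in> L" "y \<in> L" and xy: "xs = root_path x" "ys = root_path y"
    by blast
  have x: "x \<in> V" "x \<noteq> r" "card {u \<in> V. E x u} = 1"
    using assms \<open>x \<in> L\<close> unfolding is_leaf_def by auto
  show "xs = ys"
  proof (rule ccontr)
    assume "xs \<noteq> ys"
    then obtain w ws where "root_path y = root_path x @ w # ws"
      using \<open>prefix xs ys\<close> xy by (metis strict_prefixE' strict_prefixI)
    then have y: "root_path y = root_path (parent x) @ x # w # ws"
      using root_path_parent[OF x(1,2)] by simp
    have "is_path V E (root_path y)"
      using \<open>y \<in> L\<close> assms(1) is_path_root_path unfolding is_leaf_def by blast
    then have "E x w" "w \<notin> set (root_path (parent x))"
      unfolding y by (auto simp: is_path_iff successively_append_iff)
    moreover have "E x (parent x)" "parent x \<in> set (root_path (parent x))"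
      using parent[OF x(1,2)] edge_sym last_in_set[OF root_path_not_Nil] by auto
    ultimately have "card {parent x, w} \<le> card {u \<in> V. E x u}"
      using finite_vertices edge_vertices by (intro card_mono) auto
    moreover have "parent x \<noteq> w"
      using \<open>w \<notin> set (root_path (parent x))\<close> \<open>parent x \<in> set (root_path (parent x))\<close> by blast
    ultimately show False using x(3) by simp
  qed
qed

section \<open>Leaves joined by tripods of equal weight\<close>

lemma weighted_tripod_if_lcp12_longest:
  fixes lab :: "nat set \<Rightarrow> int" and q b c :: int
  assumes V: "x1 \<in> V" "x2 \<in> V" "x3 \<in> V"
    and longest:
      "length (longest_common_prefix (root_path x1) (root_path x3))
         \<le> length (longest_common_prefix (root_path x1) (root_path x2))"
      "length (longest_common_prefix (root_path x2) (root_path x3))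
         \<le> length (longest_common_prefix (root_path x1) (root_path x2))"
    and c: "path_weight lab (root_path x1) mod q = c" "path_weight lab (root_path x2) mod q = c"
      "path_weight lab (root_path x3) mod q = c"
    and b: "path_weight lab (longest_common_prefix (root_path x1) (root_path x2)) mod q = b"
      "path_weight lab (longest_common_prefix (root_path x1) (root_path x3)) mod q = b"
  shows "weighted_tripod V E lab q ((c - b) mod q) x1 x2 x3"
proof -
  define C where "C = longest_common_prefix (root_path x1) (root_path x2)"
  define D where "D = longest_common_prefix (root_path x1) (root_path x3)"
  obtain B1 where A1: "root_path x1 = C @ B1"
    unfolding C_def by (metis longest_common_prefix_prefix1 prefixE)
  obtain B2 where A2: "root_path x2 = C @ B2"
    unfolding C_def by (metis longest_common_prefix_prefix2 prefixE)
  obtain B3 where A3: "root_path x3 = D @ B3"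
    unfolding D_def by (metis longest_common_prefix_prefix2 prefixE)
  have "prefix D C"
    using longest(1) unfolding C_def D_def
    by (metis longest_common_prefix_prefix1 prefix_length_prefix)
  then obtain X where X: "C = D @ X" by (rule prefixE)
  have "D \<noteq> []"
    using V longest_common_prefix_root_path_not_Nil unfolding D_def by auto
  have B1: "B1 = drop (length C) (root_path x1)" using A1 by simp
  have B2: "B2 = drop (length C) (root_path x2)" using A2 by simp
  have B3: "B3 = drop (length D) (root_path x3)" using A3 by simp
  have "set B1 \<inter> set (root_path x2) = {}"
    unfolding B1 C_def by (rule drop_root_path_disjoint[OF V(1,2) order_refl])
  moreover have "set B1 \<inter> set (root_path x3) = {}"
    unfolding B1 C_def by (rule drop_root_path_disjoint[OF V(1,3) longest(1)])
  moreover have "set B2 \<inter> set (root_path x3) = {}"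
    unfolding B2 C_def by (rule drop_root_path_disjoint[OF V(2,3) longest(2)])
  moreover have "set B3 \<inter> set (root_path x1) = {}"
    unfolding B3 D_def
    by (rule drop_root_path_disjoint[OF V(3,1)]) (simp add: longest_common_prefix_commute)
  ultimately have disj: "set B1 \<inter> set B2 = {}" "set B1 \<inter> set B3 = {}" "set B2 \<inter> set B3 = {}"
      "set C \<inter> set B3 = {}"
    unfolding A1 A2 A3 by auto
  have paths: "is_path V E (C @ B1)" "is_path V E (C @ B2)" "is_path V E (D @ B3)"
    using is_path_root_path[OF V(1)] is_path_root_path[OF V(2)] is_path_root_path[OF V(3)]
    unfolding A1 A2 A3 .
  from weighted_tripod_of_branching[OF edge_sym paths X \<open>D \<noteq> []\<close> disj
      c[unfolded A1 A2 A3] b[folded C_def D_def]]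
  show ?thesis
    by (simp only: A1[symmetric] A2[symmetric] A3[symmetric] last_root_path)
qed

lemma weighted_tripod_if_uniform_weights:
  fixes lab :: "nat set \<Rightarrow> int" and q b c :: int
  assumes "L0 \<subseteq> V"
    and c: "\<forall>x\<in>L0. path_weight lab (root_path x) mod q = c"
    and b: "\<forall>x\<in>L0. \<forall>y\<in>L0. x \<noteq> y \<longrightarrow>
      path_weight lab (longest_common_prefix (root_path x) (root_path y)) mod q = b"
    and x: "x1 \<in> L0" "x2 \<in> L0" "x3 \<in> L0" "x1 \<noteq> x2" "x1 \<noteq> x3" "x2 \<noteq> x3"
  shows "weighted_tripod V E lab q ((c - b) mod q) x1 x2 x3"
proof -
  let ?l = "\<lambda>x y. length (longest_common_prefix (root_path x) (root_path y))"
  have V: "x1 \<in> V" "x2 \<in> V" "x3 \<in> V" using x \<open>L0 \<subseteq> V\<close> by auto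
  have sym: "?l x y = ?l y x" for x y by (simp add: longest_common_prefix_commute)
  note ordered = weighted_tripod_if_lcp12_longest[where lab = lab and q = q and b = b and c = c]
  consider "?l x1 x3 \<le> ?l x1 x2" "?l x2 x3 \<le> ?l x1 x2"
    | "?l x1 x2 \<le> ?l x1 x3" "?l x3 x2 \<le> ?l x1 x3"
    | "?l x3 x1 \<le> ?l x3 x2" "?l x2 x1 \<le> ?l x3 x2"
    using sym[of x1 x2] sym[of x1 x3] sym[of x2 x3] by linarith
  then show ?thesis
  proof cases
    case 1
    then show ?thesis using ordered[OF V] c b x by simp
  next
    case 2
    then have "weighted_tripod V E lab q ((c - b) mod q) x1 x3 x2"
      using ordered[OF V(1,3,2)] c b x by simp
    then show ?thesis by (rule weighted_tripod_swap23)
  next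
    case 3
    then have "weighted_tripod V E lab q ((c - b) mod q) x3 x2 x1"
      using ordered[OF V(3,2,1)] c b x by simp
    then show ?thesis by (rule weighted_tripod_swap13)
  qed
qed

lemma leaves_with_uniform_root_weights:
  fixes lab :: "nat set \<Rightarrow> int"
  assumes "2 \<le> k" "0 < q" "\<forall>x\<in>L. is_leaf V E x" "r \<notin> L"
    and "q * k ^ (q * (k - 1) + 1) \<le> card L"
  shows "\<exists>L0\<subseteq>L. card L0 = k \<and> (\<exists>c b.
    (\<forall>x\<in>L0. path_weight lab (root_path x) mod int q = c) \<and>
    (\<forall>x\<in>L0. \<forall>y\<in>L0. x \<noteq> y \<longrightarrow>
       path_weight lab (longest_common_prefix (root_path x) (root_path y)) mod int q = b))"
proof -
  let ?W = "path_weight lab" and ?Z = "{0..<int q}" and ?N = "k ^ (q * (k - 1) + 1)"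
  have "L \<subseteq> V" using assms(3) unfolding is_leaf_def by blast
  then have "finite L" using finite_vertices by (rule finite_subset)
  have Z: "finite ?Z" "?Z \<noteq> {}" "card ?Z = q" "\<And>i. i mod int q \<in> ?Z"
    using assms(2) by auto
  have "\<exists>c\<in>?Z. ?N \<le> card {x\<in>L. ?W (root_path x) mod int q = c}"
    using Z(4) assms(5) by (intro pigeonhole_fiber[OF \<open>finite L\<close> _ Z(1,2)]) auto
  then obtain c where "?N \<le> card {x\<in>L. ?W (root_path x) mod int q = c}"
    by blast
  moreover define L1 where "L1 = {x\<in>L. ?W (root_path x) mod int q = c}"
  moreover have inj: "inj_on root_path L1"
    by (metis inj_onI last_root_path)
  ultimately have "k ^ (card ?Z * (k - 1) + 1) \<le> card (root_path ` L1)"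
    using Z(3) by (simp add: card_image)
  moreover have "prefix_free (root_path ` L1)"
    using assms(3,4) unfolding L1_def by (intro prefix_free_root_paths_of_leaves) auto
  moreover have "finite (root_path ` L1)"
    using \<open>finite L\<close> unfolding L1_def by simp
  ultimately obtain S0 b where "S0 \<subseteq> root_path ` L1" "card S0 = k"
    and b: "\<forall>xs\<in>S0. \<forall>ys\<in>S0. xs \<noteq> ys \<longrightarrow> ?W (longest_common_prefix xs ys) mod int q = b"
    using prefix_free_Ramsey_lcp[where col = "\<lambda>xs. ?W xs mod int q", OF assms(1) _ _ Z(1) Z(4)]
    by blast
  then obtain L0 where "L0 \<subseteq> L1" "S0 = root_path ` L0"
    by (meson subset_imageE)
  then have "L0 \<subseteq> L" "card L0 = k" "\<forall>x\<in>L0. ?W (root_path x) mod int q = c"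
    using \<open>card S0 = k\<close> inj unfolding L1_def
    by (auto simp: card_image inj_on_subset)
  moreover have "\<forall>x\<in>L0. \<forall>y\<in>L0. x \<noteq> y \<longrightarrow>
      ?W (longest_common_prefix (root_path x) (root_path y)) mod int q = b"
    using b \<open>S0 = root_path ` L0\<close> by (metis image_eqI last_root_path)
  ultimately show ?thesis by blast
qed

end

lemma connected_graph_leaves_weighted_tripods:
  fixes lab :: "nat set \<Rightarrow> int"
  assumes "simple_graph V E" "connected_graph V E" "2 \<le> k" "0 < q"
    and leaves: "\<forall>x\<in>L. is_leaf V E x" and card: "q * k ^ (q * (k - 1) + 1) < card L"
  shows "\<exists>L0 a. L0 \<subseteq> L \<and> card L0 = k \<and> a \<in> {0..<int q} \<and>
    (\<forall>x1\<in>L0. \<forall>x2\<in>L0. \<forall>x3\<in>L0. x1 \<noteq> x2 \<and> x1 \<noteq> x3 \<and> x2 \<noteq> x3 \<longrightarrow>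
       weighted_tripod V E lab (int q) a x1 x2 x3)"
proof -
  obtain r where "r \<in> V"
    using assms(2) unfolding connected_graph_def by blast
  then interpret rooted_graph V E r
    using assms(1,2) by unfold_locales
  have "finite L" using card card.infinite by fastforce
  \<comment> \<open>a leaf r would have root path [r], a prefix of all the others\<close>
  then have "q * k ^ (q * (k - 1) + 1) \<le> card (L - {r})"
    using card by (auto simp: card_Diff_singleton_if)
  then obtain L0 c b where L0: "L0 \<subseteq> L - {r}" "card L0 = k"
    and "\<forall>x\<in>L0. path_weight lab (root_path x) mod int q = c"
    and "\<forall>x\<in>L0. \<forall>y\<in>L0. x \<noteq> y \<longrightarrow>
      path_weight lab (longest_common_prefix (root_path x) (root_path y)) mod int q = b"
    using leaves_with_uniform_root_weights[of k q "L - {r}" lab] assms(3,4) leaves by auto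
  moreover have "L0 \<subseteq> V" using L0(1) leaves unfolding is_leaf_def by auto
  ultimately have "weighted_tripod V E lab (int q) ((c - b) mod int q) x1 x2 x3"
    if "x1 \<in> L0" "x2 \<in> L0" "x3 \<in> L0" "x1 \<noteq> x2 \<and> x1 \<noteq> x3 \<and> x2 \<noteq> x3" for x1 x2 x3
    using that by (intro weighted_tripod_if_uniform_weights) auto
  then show ?thesis
    using L0 assms(4) by (intro exI[of _ L0] exI[of _ "(c - b) mod int q"]) auto
qed

theorem lemma3:
  shows "\<exists>f1 :: nat \<Rightarrow> nat \<Rightarrow> nat. \<forall>k q. k \<ge> 2 \<longrightarrow> q \<ge> 2 \<longrightarrow>
    (\<forall>V E (lab :: nat set \<Rightarrow> int) L.
       is_tree V E \<longrightarrow>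
       (\<forall>u w. E u w \<longrightarrow> lab {u, w} \<in> {0..<int q}) \<longrightarrow>
       (\<forall>x\<in>L. is_leaf V E x) \<longrightarrow>
       card L = f1 k q \<longrightarrow>
       (\<exists>L0 a. L0 \<subseteq> L \<and> card L0 = k \<and> a \<in> {0..<int q} \<and>
          (\<forall>x1\<in>L0. \<forall>x2\<in>L0. \<forall>x3\<in>L0. x1 \<noteq> x2 \<and> x1 \<noteq> x3 \<and> x2 \<noteq> x3 \<longrightarrow>
             (\<exists>v\<in>V. \<exists>p1 p2 p3.
                is_path V E p1 \<and> is_path V E p2 \<and> is_path V E p3 \<and>
                hd p1 = v \<and> hd p2 = v \<and> hd p3 = v \<and>
                last p1 = x1 \<and> last p2 = x2 \<and> last p3 = x3 \<and>
                set p1 \<inter> set p2 = {v} \<and> set p1 \<inter> set p3 = {v} \<and> set p2 \<inter> set p3 = {v} \<and>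
                path_weight lab p1 mod int q = a \<and> path_weight lab p2 mod int q = a \<and>
                path_weight lab p3 mod int q = a))))"
  unfolding weighted_tripod_def[symmetric]
  by (intro exI[of _ "\<lambda>k q. q * k ^ (q * (k - 1) + 1) + 1"] allI impI
      connected_graph_leaves_weighted_tripods) (auto simp: is_tree_def)

end
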